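(* Let $V_1,V_2,U,\tilde V_1,\tilde V_2,\tilde U\in\mathbb{R}[x]$ and $\alpha,\beta\in\mathbb{R}$ with $\alpha\ne0$, and let $m_1,m_2,\tilde m_1,\tilde m_2\ge3$ be integers with $\gcd(m_1,m_2)=1$ and $\gcd(\tilde m_1,\tilde m_2)=1$. Suppose that $$V_1\circ T_{m_1}+V_2\circ T_{m_2}=\tilde U\circ T_{\tilde m_1\tilde m_2}\circ(\alpha x+\beta)$$ and $$\tilde V_1\circ T_{\tilde m_1}\circ(\alpha x+\beta)+\tilde V_2\circ T_{\tilde m_2}\circ(\alpha x+\beta)=U\circ T_{m_1m_2},$$ where both sides of each equality are non-constant polynomials. Then $\alpha=\pm1$ and $\beta=0$.
   Context: $T_k$ denotes the Chebyshev polynomial of the first kind of degree $k$, $T_k(\cos\phi)=\cos(k\phi)$. $\circ$ denotes composition of polynomials. *)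

theory Defs
  imports "HOL-Computational_Algebra.Polynomial"
begin

fun cheb_T :: "nat \<Rightarrow> real poly" where
  "cheb_T 0 = 1"
| "cheb_T (Suc 0) = [:0, 1:]"
| "cheb_T (Suc (Suc n)) = [:0, 2:] * cheb_T (Suc n) - cheb_T n"

end

theory Submission
  imports Defs
begin

text \<open>
  Proof strategy.  Substitute x = (z + 1/z)/2 and multiply by z^D: a real polynomial f of degree
  at most D becomes a polynomial joukowski_hom D f in z, and T_m becomes (z^m + z^-m)/2.

  On the left-hand side of an identity V1 \<circ> T_m1 + V2 \<circ> T_m2 = W \<circ> T_K \<circ> (ax + b), with
  m1 and m2 dividing D, the transform is a sum of a polynomial in z^m1 and one in z^m2, so its
  coefficient at z^(D-k) vanishes unless m1 or m2 divides k.  On the right-hand side, with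
  n = deg W \<cdot> K, only the leading term of W matters for the top K coefficients, and these are
  (up to a nonzero factor) the low coefficients of cheb_hom a b n = z^n T_n(a (z + 1/z)/2 + b).
  These low coefficients are computed from the Chebyshev recurrence: they are a^n/2, n a^(n-1) b,
  and expressions carrying the factor a^2 - 1.  Since m1, m2 \<ge> 3 are coprime, no three
  consecutive integers, and no four integers k, k+2, k+4, k+6, are all multiples of m1 or m2; so
  some of these coefficients must vanish, which forces a^2 < 1, or a^2 = 1 and b = 0.
\<close>

lemma poly_cheb_T_joukowski:
  fixes z :: real
  assumes "z \<noteq> 0"
  shows "poly (cheb_T n) ((z + inverse z) / 2) = (z ^ n + inverse z ^ n) / 2"
proof (induction n rule: cheb_T.induct)
  case (3 n)
  have "poly (cheb_T (Suc (Suc n))) ((z + inverse z) / 2)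
        = (z + inverse z) * ((z ^ Suc n + inverse z ^ Suc n) / 2) - (z ^ n + inverse z ^ n) / 2"
    by (simp only: cheb_T.simps poly_diff poly_mult 3) simp
  also have "\<dots> = (z ^ Suc (Suc n) + inverse z ^ Suc (Suc n)) / 2"
    using assms by (simp add: field_simps)
  finally show ?case .
qed simp_all

lemma degree_coeff_cheb_T:
  "degree (cheb_T n) = n \<and> coeff (cheb_T n) n = (if n = 0 then 1 else 2 ^ (n - 1))"
proof (induction n rule: cheb_T.induct)
  case (3 n)
  have times_x: "[:0, 2:] * cheb_T (Suc n) = pCons 0 (smult 2 (cheb_T (Suc n)))"
    by simp
  have "cheb_T (Suc n) \<noteq> 0"
    using 3 by (metis coeff_0 power_not_zero zero_neq_numeral Suc_neq_Zero)
  then have "degree ([:0, 2:] * cheb_T (Suc n)) = Suc (Suc n)"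
    using 3 by (simp only: times_x) simp
  then have "degree (cheb_T (Suc (Suc n))) = Suc (Suc n)"
    using 3 degree_add_eq_left[of "- cheb_T n" "[:0, 2:] * cheb_T (Suc n)"] by simp
  moreover have "coeff (cheb_T (Suc (Suc n))) (Suc (Suc n)) = 2 * coeff (cheb_T (Suc n)) (Suc n)"
    using 3 by (simp add: times_x coeff_eq_0)
  ultimately show ?case
    using 3 by simp
qed simp_all

lemma degree_cheb_T [simp]: "degree (cheb_T n) = n"
  using degree_coeff_cheb_T by blast

lemma poly_eq_on_infinite:
  fixes p q :: "'a::idom poly"
  assumes "infinite S" and "\<And>x. x \<in> S \<Longrightarrow> poly p x = poly q x"
  shows "p = q"
proof (rule ccontr)
  assume "p \<noteq> q"
  then have "finite {x. poly (p - q) x = 0}"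
    by (intro poly_roots_finite) simp
  moreover have "S \<subseteq> {x. poly (p - q) x = 0}"
    using assms(2) by auto
  ultimately show False
    using assms(1) finite_subset by blast
qed

lemma poly_eq_on_positive:
  fixes p q :: "real poly"
  assumes "\<And>z. z > 0 \<Longrightarrow> poly p z = poly q z"
  shows "p = q"
  using poly_eq_on_infinite[OF infinite_Ioi[of 0]] assms by auto

text \<open>The semigroup property T_(mn) = T_m \<circ> T_n, checked on x \<ge> 1 where x = (z + 1/z)/2 with z > 0.\<close>

lemma cheb_T_mult: "cheb_T (m * n) = pcompose (cheb_T m) (cheb_T n)"
proof (rule poly_eq_on_infinite[OF infinite_Ici[of 1]])
  fix x :: real
  assume "x \<in> {1..}"
  then have x: "x \<ge> 1" by simp
  define z where "z = x + sqrt (x\<^sup>2 - 1)"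
  have z: "z > 0"
    using x by (simp add: z_def add_pos_nonneg)
  have "z * (x - sqrt (x\<^sup>2 - 1)) = 1"
    using x by (simp add: z_def algebra_simps flip: power2_eq_square)
  then have "inverse z = x - sqrt (x\<^sup>2 - 1)"
    using z by (simp add: field_simps)
  then have x_eq: "x = (z + inverse z) / 2"
    by (simp add: z_def)
  have T_n: "poly (cheb_T n) x = (z ^ n + inverse (z ^ n)) / 2"
    using poly_cheb_T_joukowski[of z n] z by (simp add: x_eq power_inverse)
  have "poly (pcompose (cheb_T m) (cheb_T n)) x = ((z ^ n) ^ m + inverse (z ^ n) ^ m) / 2"
    unfolding poly_pcompose T_n using poly_cheb_T_joukowski[of "z ^ n" m] z by simp
  also have "\<dots> = poly (cheb_T (m * n)) x"
    using poly_cheb_T_joukowski[of z "m * n"] z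
    by (simp add: x_eq power_inverse flip: power_mult) (simp add: mult.commute)
  finally show "poly (cheb_T (m * n)) x = poly (pcompose (cheb_T m) (cheb_T n)) x"
    by simp
qed

text \<open>The homogenised Joukowski transform: for deg f \<le> D, the polynomial
  joukowski_hom D f (z) = z^D f((z + 1/z)/2).  It is linear in f.\<close>

definition joukowski_hom :: "nat \<Rightarrow> real poly \<Rightarrow> real poly" where
  "joukowski_hom D f = (\<Sum>i\<le>D. smult (coeff f i) (monom 1 (D - i) * [:1/2, 0, 1/2:] ^ i))"

lemma joukowski_hom_add: "joukowski_hom D (f + g) = joukowski_hom D f + joukowski_hom D g"
  by (simp add: joukowski_hom_def sum.distrib smult_add_left)

lemma joukowski_hom_smult: "joukowski_hom D (smult c f) = smult c (joukowski_hom D f)"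
  by (rule poly_eqI) (simp add: joukowski_hom_def coeff_sum sum_distrib_left mult.assoc)

lemma poly_joukowski_hom:
  assumes "degree f \<le> D" and "z \<noteq> 0"
  shows "poly (joukowski_hom D f) z = z ^ D * poly f ((z + inverse z) / 2)"
proof -
  have quadratic: "poly [:1/2, 0, 1/2:] z = z * ((z + inverse z) / 2)"
    using assms(2) by (simp add: field_simps)
  have "poly (joukowski_hom D f) z = (\<Sum>i\<le>D. coeff f i * (z ^ (D - i) * (z * ((z + inverse z) / 2)) ^ i))"
    unfolding joukowski_hom_def poly_sum
    by (simp only: poly_smult poly_mult poly_monom poly_power quadratic mult_1)
  also have "\<dots> = (\<Sum>i\<le>D. z ^ D * (coeff f i * ((z + inverse z) / 2) ^ i))"
  proof (rule sum.cong)
    fix i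
    assume "i \<in> {..D}"
    then have "z ^ D = z ^ (D - i) * z ^ i"
      by (simp flip: power_add)
    then show "coeff f i * (z ^ (D - i) * (z * ((z + inverse z) / 2)) ^ i)
               = z ^ D * (coeff f i * ((z + inverse z) / 2) ^ i)"
      by (simp only: power_mult_distrib mult_ac)
  qed simp
  also have "\<dots> = z ^ D * poly f ((z + inverse z) / 2)"
    unfolding poly_altdef sum_distrib_left
    by (rule sum.mono_neutral_right) (use assms(1) in \<open>auto simp: coeff_eq_0\<close>)
  finally show ?thesis .
qed

lemma coeff_joukowski_hom_low:
  assumes "k + degree f < D"
  shows "coeff (joukowski_hom D f) k = 0"
  unfolding joukowski_hom_def coeff_sum
proof (rule sum.neutral, intro ballI)
  fix i
  assume "i \<in> {..D}"
  show "coeff (smult (coeff f i) (monom 1 (D - i) * [:1/2, 0, 1/2:] ^ i)) k = 0"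
  proof (cases "i \<le> degree f")
    case True
    then have "k < D - i"
      using assms by linarith
    then show ?thesis
      by (simp add: coeff_monom_mult)
  qed (simp add: coeff_eq_0)
qed

lemma joukowski_hom_cheb_T:
  assumes "D = m * E" and "degree V \<le> E"
  shows "joukowski_hom D (pcompose V (cheb_T m)) = pcompose (joukowski_hom E V) (monom 1 m)"
proof (rule poly_eq_on_positive)
  fix z :: real
  assume z: "z > 0"
  then have z0: "z \<noteq> 0"
    by simp
  have "degree (pcompose V (cheb_T m)) \<le> D"
    using assms by (simp add: degree_pcompose mult.commute)
  then have "poly (joukowski_hom D (pcompose V (cheb_T m))) z = z ^ D * poly V ((z ^ m + inverse z ^ m) / 2)"
    by (simp add: poly_joukowski_hom z0 poly_pcompose poly_cheb_T_joukowski)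
  also have "\<dots> = (z ^ m) ^ E * poly V ((z ^ m + inverse (z ^ m)) / 2)"
    by (simp add: assms(1) power_mult power_inverse)
  also have "\<dots> = poly (pcompose (joukowski_hom E V) (monom 1 m)) z"
    using poly_joukowski_hom[OF assms(2), of "z ^ m"] z by (simp add: poly_pcompose poly_monom)
  finally show "poly (joukowski_hom D (pcompose V (cheb_T m))) z
              = poly (pcompose (joukowski_hom E V) (monom 1 m)) z" .
qed

lemma coeff_pcompose_monom:
  assumes "\<not> m dvd k"
  shows "coeff (pcompose q (monom 1 m)) k = 0"
  using assms
proof (induction q arbitrary: k rule: pCons_induct)
  case (pCons c q)
  have "k \<noteq> 0"
    using pCons.prems by (metis dvd_0_right)
  moreover have "\<not> m dvd (k - m)" if "\<not> k < m"
    using pCons.prems that by (simp add: dvd_minus_self)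
  ultimately show ?case
    using pCons.IH
    by (auto simp: pcompose_pCons coeff_monom_mult coeff_pCons split: nat.splits)
qed simp

text \<open>cheb_hom a b n is the polynomial z^n T_n(a (z + 1/z)/2 + b), i.e. the transform of the
  affinely moved Chebyshev polynomial T_n(ax + b).  It is defined by the three-term recurrence of
  T_n, multiplied through by z^2, which makes its low coefficients computable.\<close>

fun cheb_hom :: "real \<Rightarrow> real \<Rightarrow> nat \<Rightarrow> real poly" where
  "cheb_hom a b 0 = 1"
| "cheb_hom a b (Suc 0) = [:a/2, b, a/2:]"
| "cheb_hom a b (Suc (Suc n)) = [:a, 2*b, a:] * cheb_hom a b (Suc n) - [:0, 0, 1:] * cheb_hom a b n"

lemma poly_cheb_hom:
  assumes "z \<noteq> 0"
  shows "poly (cheb_hom a b n) z = z ^ n * poly (cheb_T n) (a * ((z + inverse z) / 2) + b)"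
proof (induction n rule: cheb_T.induct)
  case 2
  then show ?case
    using assms by (simp add: field_simps)
next
  case (3 n)
  define w where "w = a * ((z + inverse z) / 2) + b"
  have factor: "a + 2 * b * z + a * z\<^sup>2 = 2 * z * w"
    using assms by (simp add: w_def field_simps power2_eq_square)
  have "poly (cheb_hom a b (Suc (Suc n))) z
        = (a + 2 * b * z + a * z\<^sup>2) * (z ^ Suc n * poly (cheb_T (Suc n)) w) - z\<^sup>2 * (z ^ n * poly (cheb_T n) w)"
    by (simp only: cheb_hom.simps poly_diff poly_mult 3[folded w_def]) (simp add: power2_eq_square algebra_simps)
  also have "\<dots> = z ^ Suc (Suc n) * poly (cheb_T (Suc (Suc n))) w"
    by (simp only: factor) (simp add: algebra_simps power2_eq_square)
  finally show ?case
    by (simp add: w_def)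
qed simp

lemma joukowski_hom_cheb_T_affine:
  assumes "n \<le> D"
  shows "joukowski_hom D (pcompose (cheb_T n) [:b, a:]) = monom 1 (D - n) * cheb_hom a b n"
proof (rule poly_eq_on_positive)
  fix z :: real
  assume z: "z > 0"
  have "degree (pcompose (cheb_T n) [:b, a:]) \<le> D"
    using assms degree_pcompose_le[of "cheb_T n" "[:b, a:]"] by (simp split: if_splits)
  then have "poly (joukowski_hom D (pcompose (cheb_T n) [:b, a:])) z
             = z ^ (D - n) * (z ^ n * poly (cheb_T n) (a * ((z + inverse z) / 2) + b))"
    using poly_joukowski_hom z assms by (simp add: poly_pcompose algebra_simps flip: power_add)
  then show "poly (joukowski_hom D (pcompose (cheb_T n) [:b, a:])) z = poly (monom 1 (D - n) * cheb_hom a b n) z"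
    using poly_cheb_hom[of z a b n] z by (simp add: poly_monom)
qed

lemma coeff_cheb_hom_rec:
  "coeff (cheb_hom a b (Suc (Suc n))) 0 = a * coeff (cheb_hom a b (Suc n)) 0"
  "coeff (cheb_hom a b (Suc (Suc n))) (Suc j)
     = a * coeff (cheb_hom a b (Suc n)) (Suc j) + 2 * b * coeff (cheb_hom a b (Suc n)) j
       + (case j of 0 \<Rightarrow> 0 | Suc i \<Rightarrow> a * coeff (cheb_hom a b (Suc n)) i - coeff (cheb_hom a b n) i)"
  by (auto simp: coeff_pCons split: nat.splits)

lemma coeff0_cheb_hom:
  assumes "n \<ge> 1"
  shows "coeff (cheb_hom a b n) 0 = a ^ n / 2"
proof -
  have "coeff (cheb_hom a b (Suc k)) 0 = a ^ Suc k / 2" for k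
    by (induction k) (auto simp: coeff_cheb_hom_rec)
  then show ?thesis
    using assms by (cases n) simp_all
qed

lemma coeff1_cheb_hom:
  assumes "n \<ge> 1"
  shows "coeff (cheb_hom a b n) 1 = real n * a ^ (n - 1) * b"
proof -
  have "coeff (cheb_hom a b (Suc k)) 1 = real (Suc k) * a ^ k * b" for k
  proof (induction k)
    case (Suc k)
    show ?case
      using coeff_cheb_hom_rec(2)[of a b k 0] Suc coeff0_cheb_hom[of "Suc k" a b]
      by (simp add: algebra_simps)
  qed simp
  then show ?thesis
    using assms by (cases n) simp_all
qed

lemma coeff2_cheb_hom:
  assumes "n \<ge> 2"
  shows "2 * a\<^sup>2 * coeff (cheb_hom a b n) 2 = real n * a ^ n * (a\<^sup>2 - 1 + 2 * real (n - 1) * b\<^sup>2)"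
proof -
  have "2 * a\<^sup>2 * coeff (cheb_hom a b (Suc (Suc k))) 2
        = real (Suc (Suc k)) * a ^ Suc (Suc k) * (a\<^sup>2 - 1 + 2 * real (Suc k) * b\<^sup>2)" for k
  proof (induction k)
    case 0
    then show ?case
      by (simp add: algebra_simps power2_eq_square numeral_2_eq_2)
  next
    case (Suc k)
    let ?c = "\<lambda>m j. coeff (cheb_hom a b m) j"
    have c0: "?c (Suc m) 0 = a ^ Suc m / 2" for m
      by (rule coeff0_cheb_hom) simp
    have c1: "?c (Suc (Suc k)) 1 = real (Suc (Suc k)) * a ^ Suc k * b"
      by (subst coeff1_cheb_hom) simp_all
    have rec: "?c (Suc (Suc (Suc k))) 2
          = a * ?c (Suc (Suc k)) 2 + 2 * b * ?c (Suc (Suc k)) 1 + (a * ?c (Suc (Suc k)) 0 - ?c (Suc k) 0)"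
      using coeff_cheb_hom_rec(2)[of a b "Suc k" 1] by (simp add: numeral_2_eq_2)
    have "2 * a\<^sup>2 * ?c (Suc (Suc (Suc k))) 2
          = a * (2 * a\<^sup>2 * ?c (Suc (Suc k)) 2)
            + 2 * a\<^sup>2 * (2 * b * ?c (Suc (Suc k)) 1 + (a * ?c (Suc (Suc k)) 0 - ?c (Suc k) 0))"
      unfolding rec by (simp only: algebra_simps)
    also have "\<dots> = real (Suc (Suc (Suc k))) * a ^ Suc (Suc (Suc k)) * (a\<^sup>2 - 1 + 2 * real (Suc (Suc k)) * b\<^sup>2)"
      unfolding Suc.IH c0 c1 by (simp add: algebra_simps power2_eq_square)
    finally show ?case .
  qed
  from this[of "n - 2"] show ?thesis
    using assms by (simp add: numeral_2_eq_2 Suc_diff_Suc)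
qed

lemma coeff4_cheb_hom_centered:
  assumes "n \<ge> 3"
  shows "4 * a ^ 4 * coeff (cheb_hom a 0 n) 4 = real n * a ^ n * (a\<^sup>2 - 1) * (2 + real (n - 1) * (a\<^sup>2 - 1))"
proof -
  have "4 * a ^ 4 * coeff (cheb_hom a 0 (Suc (Suc (Suc k)))) 4
        = real (Suc (Suc (Suc k))) * a ^ Suc (Suc (Suc k)) * (a\<^sup>2 - 1) * (2 + real (Suc (Suc k)) * (a\<^sup>2 - 1))" for k
  proof (induction k)
    case 0
    then show ?case
      by (simp add: numeral_eq_Suc algebra_simps power2_eq_square)
  next
    case (Suc k)
    let ?c = "\<lambda>m j. coeff (cheb_hom a 0 m) j"
    have c2: "2 * a\<^sup>2 * ?c (Suc (Suc m)) 2 = real (Suc (Suc m)) * a ^ Suc (Suc m) * (a\<^sup>2 - 1)" for m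
      by (subst coeff2_cheb_hom) simp_all
    have rec: "?c (Suc (Suc (Suc (Suc k)))) 4
        = a * ?c (Suc (Suc (Suc k))) 4 + (a * ?c (Suc (Suc (Suc k))) 2 - ?c (Suc (Suc k)) 2)"
      using coeff_cheb_hom_rec(2)[of a 0 "Suc (Suc k)" 3] by (simp add: numeral_eq_Suc)
    have "4 * a ^ 4 * ?c (Suc (Suc (Suc (Suc k)))) 4
        = a * (4 * a ^ 4 * ?c (Suc (Suc (Suc k))) 4)
          + 2 * a\<^sup>2 * (a * (2 * a\<^sup>2 * ?c (Suc (Suc (Suc k))) 2) - 2 * a\<^sup>2 * ?c (Suc (Suc k)) 2)"
      unfolding rec by algebra
    also have "\<dots> = real (Suc (Suc (Suc (Suc k)))) * a ^ Suc (Suc (Suc (Suc k))) * (a\<^sup>2 - 1)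
                     * (2 + real (Suc (Suc (Suc k))) * (a\<^sup>2 - 1))"
      unfolding Suc.IH c2 by (simp add: algebra_simps power2_eq_square)
    finally show ?case .
  qed
  from this[of "n - 3"] show ?thesis
    using assms by (simp add: numeral_eq_Suc Suc_diff_Suc)
qed

lemma coeff6_cheb_hom_centered:
  assumes "n \<ge> 4"
  shows "12 * a ^ 6 * coeff (cheb_hom a 0 n) 6
         = real n * a ^ n * (a\<^sup>2 - 1)
           * (6 + 6 * real (n - 2) * (a\<^sup>2 - 1) + real (n - 1) * real (n - 2) * (a\<^sup>2 - 1)\<^sup>2)"
proof -
  have "12 * a ^ 6 * coeff (cheb_hom a 0 (Suc (Suc (Suc (Suc k))))) 6
        = real (Suc (Suc (Suc (Suc k)))) * a ^ Suc (Suc (Suc (Suc k))) * (a\<^sup>2 - 1)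
          * (6 + 6 * real (Suc (Suc k)) * (a\<^sup>2 - 1) + real (Suc (Suc (Suc k))) * real (Suc (Suc k)) * (a\<^sup>2 - 1)\<^sup>2)" for k
  proof (induction k)
    case 0
    then show ?case
      by (simp add: numeral_eq_Suc algebra_simps power2_eq_square)
  next
    case (Suc k)
    let ?c = "\<lambda>m j. coeff (cheb_hom a 0 m) j"
    have c4: "4 * a ^ 4 * ?c (Suc (Suc (Suc m))) 4
              = real (Suc (Suc (Suc m))) * a ^ Suc (Suc (Suc m)) * (a\<^sup>2 - 1) * (2 + real (Suc (Suc m)) * (a\<^sup>2 - 1))" for m
      by (subst coeff4_cheb_hom_centered) simp_all
    have rec: "?c (Suc (Suc (Suc (Suc (Suc k))))) 6
        = a * ?c (Suc (Suc (Suc (Suc k)))) 6 + (a * ?c (Suc (Suc (Suc (Suc k)))) 4 - ?c (Suc (Suc (Suc k))) 4)"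
      using coeff_cheb_hom_rec(2)[of a 0 "Suc (Suc (Suc k))" 5] by (simp add: numeral_eq_Suc)
    have "12 * a ^ 6 * ?c (Suc (Suc (Suc (Suc (Suc k))))) 6
        = a * (12 * a ^ 6 * ?c (Suc (Suc (Suc (Suc k)))) 6)
          + 3 * a\<^sup>2 * (a * (4 * a ^ 4 * ?c (Suc (Suc (Suc (Suc k)))) 4) - 4 * a ^ 4 * ?c (Suc (Suc (Suc k))) 4)"
      unfolding rec by algebra
    also have "\<dots> = real (Suc (Suc (Suc (Suc (Suc k))))) * a ^ Suc (Suc (Suc (Suc (Suc k)))) * (a\<^sup>2 - 1)
          * (6 + 6 * real (Suc (Suc (Suc k))) * (a\<^sup>2 - 1)
             + real (Suc (Suc (Suc (Suc k)))) * real (Suc (Suc (Suc k))) * (a\<^sup>2 - 1)\<^sup>2)"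
      unfolding Suc.IH c4 by (simp add: algebra_simps power2_eq_square)
    finally show ?case .
  qed
  from this[of "n - 4"] show ?thesis
    using assms by (simp add: numeral_eq_Suc Suc_diff_Suc)
qed

text \<open>Two multiples of m differ by at least m.  Consequently, if m1, m2 \<ge> 3 then no three
  consecutive integers are all multiples of m1 or m2, and if moreover m1, m2 are coprime, the same
  holds for k, k+2, k+4, k+6 (the only escape would be m1 = m2 = 4).\<close>

lemma not_dvd_shift:
  fixes m k d :: nat
  assumes "0 < d" "d < m" "m dvd k"
  shows "\<not> m dvd k + d"
  using assms by (metis dvd_add_right_iff nat_dvd_not_less)

lemma no_three_consecutive_multiples:
  fixes m1 m2 k :: nat
  assumes "m1 \<ge> 3" "m2 \<ge> 3"
  shows "\<not> ((m1 dvd k \<or> m2 dvd k) \<and> (m1 dvd k + 1 \<or> m2 dvd k + 1) \<and> (m1 dvd k + 2 \<or> m2 dvd k + 2))"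
proof -
  have "\<not> (m dvd k \<and> m dvd k + 1)" "\<not> (m dvd k + 1 \<and> m dvd k + 2)" "\<not> (m dvd k \<and> m dvd k + 2)"
    if "m \<ge> 3" for m
    using not_dvd_shift[of 1 m k] not_dvd_shift[of 1 m "k + 1"] not_dvd_shift[of 2 m k] that
    by (auto simp: add.assoc)
  from this[OF assms(1)] this[OF assms(2)] show ?thesis
    by blast
qed

lemma no_four_even_spaced_multiples:
  fixes m1 m2 k :: nat
  assumes "m1 \<ge> 3" "m2 \<ge> 3" "coprime m1 m2"
  shows "\<not> ((m1 dvd k \<or> m2 dvd k) \<and> (m1 dvd k + 2 \<or> m2 dvd k + 2)
            \<and> (m1 dvd k + 4 \<or> m2 dvd k + 4) \<and> (m1 dvd k + 6 \<or> m2 dvd k + 6))"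
proof
  assume covered: "(m1 dvd k \<or> m2 dvd k) \<and> (m1 dvd k + 2 \<or> m2 dvd k + 2)
                   \<and> (m1 dvd k + 4 \<or> m2 dvd k + 4) \<and> (m1 dvd k + 6 \<or> m2 dvd k + 6)"
  have divides_4: "m = 4" if "m dvd 4" "m \<ge> 3" for m :: nat
  proof -
    have "m \<le> 4"
      using that(1) by (rule dvd_imp_le) simp
    then have "m = 3 \<or> m = 4"
      using that(2) by auto
    then show ?thesis
      using that(1) by auto
  qed
  have both_4: "p = 4 \<and> q = 4"
    if "p \<ge> 3" "q \<ge> 3" "p dvd k + 2" "q dvd k + 4" "p dvd k \<or> q dvd k" "p dvd k + 6 \<or> q dvd k + 6"
    for p q :: nat
  proof -
    have "\<not> p dvd k"
      using not_dvd_shift[of 2 p k] that by auto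
    then have "q dvd k"
      using that(5) by blast
    then have "q dvd 4"
      using that(4) by (simp add: dvd_add_right_iff)
    have six: "k + 6 = (k + 4) + 2" "k + 6 = (k + 2) + 4"
      by simp_all
    have "\<not> q dvd k + 6"
      unfolding six(1) by (rule not_dvd_shift) (use that in simp_all)
    then have "p dvd (k + 2) + 4"
      using that(6) six(2) by argo
    then have "p dvd 4"
      using that(3) dvd_add_right_iff by blast
    with \<open>q dvd 4\<close> show ?thesis
      using divides_4 that(1,2) by blast
  qed
  have four: "k + 4 = (k + 2) + 2"
    by simp
  have "\<not> (m dvd k + 2 \<and> m dvd k + 4)" if "m \<ge> 3" for m
    unfolding four using not_dvd_shift[of 2 m "k + 2"] that by auto
  then have "m1 = 4 \<and> m2 = 4"
    using covered both_4[of m1 m2] both_4[of m2 m1] assms(1,2) by blast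
  then show False
    using assms(3) by simp
qed

lemma coeff_joukowski_hom_cheb_sum:
  fixes V1 V2 :: "real poly"
  assumes "D = m1 * E1" "degree V1 \<le> E1" "D = m2 * E2" "degree V2 \<le> E2"
    and "k \<le> D" "\<not> m1 dvd k" "\<not> m2 dvd k"
  shows "coeff (joukowski_hom D (pcompose V1 (cheb_T m1) + pcompose V2 (cheb_T m2))) (D - k) = 0"
proof -
  have "m1 dvd D" "m2 dvd D"
    using assms(1,3) by (metis dvd_triv_left)+
  then have "\<not> m1 dvd D - k" "\<not> m2 dvd D - k"
    using dvd_diffD1[of m1 D k] dvd_diffD1[of m2 D k] assms(5-7) by auto
  then show ?thesis
    unfolding joukowski_hom_add joukowski_hom_cheb_T[OF assms(1,2)] joukowski_hom_cheb_T[OF assms(3,4)]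
    by (simp add: coeff_pcompose_monom)
qed

text \<open>Top coefficients of the right-hand side: writing W = c T_d + g with deg g < d, the term
  g \<circ> T_K \<circ> (ax+b) has degree \<le> n - K, so the K top coefficients of the transform of
  W \<circ> T_K \<circ> (ax+b) are c times the low coefficients of cheb_hom a b n, where n = dK.\<close>

lemma coeff_joukowski_hom_cheb_affine_top:
  fixes W :: "real poly"
  assumes "degree W > 0" "n = degree W * K" "n \<le> D" "j < K"
  shows "coeff (joukowski_hom D (pcompose W (pcompose (cheb_T K) [:b, a:]))) (D - n + j)
         = lead_coeff W / 2 ^ (degree W - 1) * coeff (cheb_hom a b n) j"
proof -
  define d where "d = degree W"
  define c where "c = lead_coeff W / 2 ^ (d - 1)"
  define g where "g = W - smult c (cheb_T d)"
  have "degree g \<le> d - 1"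
  proof (rule degree_le, intro allI impI)
    fix i
    assume "d - 1 < i"
    then consider "i = d" | "i > d"
      by linarith
    then show "coeff g i = 0"
      by cases (use assms(1) in \<open>simp_all add: g_def c_def d_def degree_coeff_cheb_T coeff_eq_0\<close>)
  qed
  then have "degree (pcompose g (pcompose (cheb_T K) [:b, a:])) \<le> (d - 1) * K"
    by (auto simp: degree_pcompose intro!: mult_le_mono)
  also have "\<dots> = n - K"
    by (simp add: assms(2) d_def diff_mult_distrib)
  finally have "degree (pcompose g (pcompose (cheb_T K) [:b, a:])) \<le> n - K" .
  moreover have "K \<le> n"
    using assms(1,2) by simp
  ultimately have low: "coeff (joukowski_hom D (pcompose g (pcompose (cheb_T K) [:b, a:]))) (D - n + j) = 0"
    using assms(3,4) by (intro coeff_joukowski_hom_low) linarith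
  have "pcompose W (pcompose (cheb_T K) [:b, a:])
        = smult c (pcompose (cheb_T n) [:b, a:]) + pcompose g (pcompose (cheb_T K) [:b, a:])"
    by (simp add: g_def assms(2) d_def pcompose_diff pcompose_smult pcompose_assoc cheb_T_mult)
  then show ?thesis
    using low assms(3) by (simp add: joukowski_hom_add joukowski_hom_smult
        joukowski_hom_cheb_T_affine coeff_monom_mult c_def d_def)
qed

lemma coeff_cheb_hom_gap:
  fixes V1 V2 W :: "real poly"
  assumes "m1 > 0" "m2 > 0"
    and eq: "pcompose V1 (cheb_T m1) + pcompose V2 (cheb_T m2) = pcompose W (pcompose (cheb_T K) [:b, a:])"
    and "degree W > 0" "n = degree W * K" "j < K" "j \<le> n" "\<not> m1 dvd n - j" "\<not> m2 dvd n - j"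
  shows "coeff (cheb_hom a b n) j = 0"
proof -
  define E where "E = degree V1 + degree V2 + n"
  define D where "D = m1 * m2 * E"
  have "degree V1 \<le> E" "degree V2 \<le> E" "n \<le> E"
    by (simp_all add: E_def)
  moreover have "E \<le> m2 * E" "E \<le> m1 * E" "E \<le> D"
    using assms(1,2) by (simp_all add: D_def)
  ultimately have deg: "degree V1 \<le> m2 * E" "degree V2 \<le> m1 * E" and "n \<le> D"
    by linarith+
  have "coeff (joukowski_hom D (pcompose W (pcompose (cheb_T K) [:b, a:]))) (D - (n - j)) = 0"
    unfolding eq[symmetric]
    by (rule coeff_joukowski_hom_cheb_sum[OF _ deg(1) _ deg(2)]) (use assms(8,9) \<open>n \<le> D\<close> in \<open>simp_all add: D_def mult_ac\<close>)
  moreover have "D - (n - j) = D - n + j"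
    using assms(7) \<open>n \<le> D\<close> by simp
  ultimately have "lead_coeff W / 2 ^ (degree W - 1) * coeff (cheb_hom a b n) j = 0"
    using coeff_joukowski_hom_cheb_affine_top[OF assms(4,5) \<open>n \<le> D\<close> assms(6)] by simp
  then show ?thesis
    using assms(4) by auto
qed

text \<open>If b \<noteq> 0 and a^2 \<ge> 1, the coefficients of z^0, z^1, z^2 of cheb_hom a b n are all nonzero,
  so n, n-1, n-2 would all be multiples of m1 or m2.\<close>

lemma cheb_hom_gap_shifted:
  fixes m1 m2 n :: nat
  assumes "m1 \<ge> 3" "m2 \<ge> 3" "n \<ge> 2" "a \<noteq> 0" "b \<noteq> 0"
    and gap: "\<And>j. j \<le> 2 \<Longrightarrow> \<not> m1 dvd n - j \<Longrightarrow> \<not> m2 dvd n - j \<Longrightarrow> coeff (cheb_hom a b n) j = 0"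
  shows "a\<^sup>2 < 1"
proof (rule ccontr)
  assume "\<not> a\<^sup>2 < 1"
  moreover have "real (n - 1) * b\<^sup>2 > 0"
    using assms(3,5) by simp
  ultimately have factor: "a\<^sup>2 - 1 + 2 * real (n - 1) * b\<^sup>2 \<noteq> 0"
    by linarith
  have "coeff (cheb_hom a b n) 0 \<noteq> 0"
    using coeff0_cheb_hom[of n a b] assms(3,4) by auto
  then have "m1 dvd n \<or> m2 dvd n"
    using gap[of 0] by auto
  moreover have "coeff (cheb_hom a b n) 1 \<noteq> 0"
    using coeff1_cheb_hom[of n a b] assms(3-5) by simp
  then have "m1 dvd n - 1 \<or> m2 dvd n - 1"
    using gap[of 1] by auto
  moreover have "coeff (cheb_hom a b n) 2 \<noteq> 0"
    using coeff2_cheb_hom[of n a b] factor assms(3,4) by auto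
  then have "m1 dvd n - 2 \<or> m2 dvd n - 2"
    using gap[of 2] by auto
  moreover have "n - 2 + 1 = n - 1" "n - 2 + 2 = n"
    using assms(3) by simp_all
  ultimately show False
    using no_three_consecutive_multiples[OF assms(1,2), of "n - 2"] by metis
qed

text \<open>If b = 0 and a^2 > 1, the coefficients of z^0, z^2, z^4, z^6 are all nonzero (each is a
  sum of positive terms times a^n), so n, n-2, n-4, n-6 would all be multiples of m1 or m2.\<close>

lemma cheb_hom_gap_centered:
  fixes m1 m2 n :: nat
  assumes "m1 \<ge> 3" "m2 \<ge> 3" "coprime m1 m2" "n \<ge> 6" "a \<noteq> 0"
    and gap: "\<And>j. j \<le> 6 \<Longrightarrow> \<not> m1 dvd n - j \<Longrightarrow> \<not> m2 dvd n - j \<Longrightarrow> coeff (cheb_hom a 0 n) j = 0"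
  shows "a\<^sup>2 \<le> 1"
proof (rule ccontr)
  assume "\<not> a\<^sup>2 \<le> 1"
  then have t: "a\<^sup>2 - 1 > 0"
    by simp
  have "coeff (cheb_hom a 0 n) 0 \<noteq> 0"
    using coeff0_cheb_hom[of n a 0] assms(4,5) by auto
  then have "m1 dvd n \<or> m2 dvd n"
    using gap[of 0] by auto
  moreover have "coeff (cheb_hom a 0 n) 2 \<noteq> 0"
    using coeff2_cheb_hom[of n a 0] t assms(4,5) by auto
  then have "m1 dvd n - 2 \<or> m2 dvd n - 2"
    using gap[of 2] by auto
  moreover have "2 + real (n - 1) * (a\<^sup>2 - 1) > 0"
    using t by (simp add: add_pos_nonneg)
  then have "coeff (cheb_hom a 0 n) 4 \<noteq> 0"
    using coeff4_cheb_hom_centered[of n a] t assms(4,5) by auto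
  then have "m1 dvd n - 4 \<or> m2 dvd n - 4"
    using gap[of 4] by auto
  moreover have "6 + 6 * real (n - 2) * (a\<^sup>2 - 1) + real (n - 1) * real (n - 2) * (a\<^sup>2 - 1)\<^sup>2 > 0"
    using t by (simp add: add_pos_nonneg)
  then have "coeff (cheb_hom a 0 n) 6 \<noteq> 0"
    using coeff6_cheb_hom_centered[of n a] t assms(4,5) by auto
  then have "m1 dvd n - 6 \<or> m2 dvd n - 6"
    using gap[of 6] by auto
  moreover have "n - 6 + 2 = n - 4" "n - 6 + 4 = n - 2" "n - 6 + 6 = n"
    using assms(4) by simp_all
  ultimately show False
    using no_four_even_spaced_multiples[OF assms(1-3), of "n - 6"] by metis
qed

lemma affine_cheb_sum_contraction:
  fixes V1 V2 W :: "real poly"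
  assumes "m1 \<ge> 3" "m2 \<ge> 3" "coprime m1 m2" "K > 6" "a \<noteq> 0" "degree W > 0"
    and eq: "pcompose V1 (cheb_T m1) + pcompose V2 (cheb_T m2) = pcompose W (pcompose (cheb_T K) [:b, a:])"
  shows "a\<^sup>2 \<le> 1 \<and> (a\<^sup>2 = 1 \<longrightarrow> b = 0)"
proof -
  define n where "n = degree W * K"
  have "n \<ge> K"
    using assms(6) by (simp add: n_def)
  then have n: "n > 6"
    using assms(4) by simp
  have gap: "coeff (cheb_hom a b n) j = 0" if "j \<le> 6" "\<not> m1 dvd n - j" "\<not> m2 dvd n - j" for j
    using coeff_cheb_hom_gap[OF _ _ eq assms(6) n_def] that assms(1,2,4) n by simp
  show ?thesis
  proof (cases "b = 0")
    case True
    have "a\<^sup>2 \<le> 1"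
      by (rule cheb_hom_gap_centered[where n = n, OF assms(1-3) _ assms(5)]) (use n gap True in auto)
    then show ?thesis
      using True by simp
  next
    case False
    have "a\<^sup>2 < 1"
      by (rule cheb_hom_gap_shifted[where n = n, OF assms(1,2) _ assms(5) False]) (use n gap in auto)
    then show ?thesis
      by simp
  qed
qed

lemma pcompose_affine_inverse:
  fixes p q :: "'a::field poly"
  assumes "c \<noteq> 0" and "pcompose p [:d, c:] = q"
  shows "p = pcompose q [:- d / c, 1 / c:]"
proof -
  have "pcompose [:d, c:] [:- d / c, 1 / c:] = [:0, 1:]"
    using assms(1) by (simp add: pcompose_pCons)
  then show ?thesis
    using assms(2) by (metis pcompose_assoc pcompose_idR)
qed

text \<open>Main theorem: apply the one-sided statement to the first identity and, after inverting the
  affine map, to the second; this gives \<alpha>^2 \<le> 1 and \<alpha>^-2 \<le> 1, hence \<alpha>^2 = 1 and \<beta> = 0.\<close>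

theorem proposition3p1:
  fixes V1 V2 U V1' V2' U' :: "real poly" and \<alpha> \<beta> :: real
    and m1 m2 m1' m2' :: nat
  assumes "\<alpha> \<noteq> 0"
    and "m1 \<ge> 3" "m2 \<ge> 3" "m1' \<ge> 3" "m2' \<ge> 3"
    and "coprime m1 m2" "coprime m1' m2'"
    and eq1: "pcompose V1 (cheb_T m1) + pcompose V2 (cheb_T m2)
              = pcompose U' (pcompose (cheb_T (m1' * m2')) [:\<beta>, \<alpha>:])"
    and eq2: "pcompose V1' (pcompose (cheb_T m1') [:\<beta>, \<alpha>:])
              + pcompose V2' (pcompose (cheb_T m2') [:\<beta>, \<alpha>:])
              = pcompose U (cheb_T (m1 * m2))"
    and nc1: "degree (pcompose V1 (cheb_T m1) + pcompose V2 (cheb_T m2)) > 0"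
    and nc2: "degree (pcompose U (cheb_T (m1 * m2))) > 0"
  shows "(\<alpha> = 1 \<or> \<alpha> = -1) \<and> \<beta> = 0"
proof -
  have "m1 * m2 > 6" "m1' * m2' > 6"
    using mult_le_mono[of 3 m1 3 m2] mult_le_mono[of 3 m1' 3 m2'] assms(2-5) by simp_all
  have "degree U' > 0" "degree U > 0"
    using nc1 nc2 by (simp_all add: eq1 degree_pcompose)
  have first: "\<alpha>\<^sup>2 \<le> 1 \<and> (\<alpha>\<^sup>2 = 1 \<longrightarrow> \<beta> = 0)"
    by (rule affine_cheb_sum_contraction[OF assms(2,3,6) \<open>m1' * m2' > 6\<close> assms(1) \<open>degree U' > 0\<close> eq1])
  have "pcompose (pcompose V1' (cheb_T m1') + pcompose V2' (cheb_T m2')) [:\<beta>, \<alpha>:]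
        = pcompose U (cheb_T (m1 * m2))"
    using eq2 by (simp add: pcompose_add pcompose_assoc)
  from pcompose_affine_inverse[OF assms(1) this] have "pcompose V1' (cheb_T m1') + pcompose V2' (cheb_T m2')
             = pcompose U (pcompose (cheb_T (m1 * m2)) [:- \<beta> / \<alpha>, 1 / \<alpha>:])"
    by (simp add: pcompose_assoc)
  then have "(1 / \<alpha>)\<^sup>2 \<le> 1"
    using affine_cheb_sum_contraction[OF assms(4,5,7) \<open>m1 * m2 > 6\<close> _ \<open>degree U > 0\<close>] assms(1)
    by simp
  then have "\<alpha>\<^sup>2 = 1"
    using first assms(1) by (simp add: power_divide field_simps)
  then show ?thesis
    using first by (simp add: power2_eq_1_iff)
qed

end
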